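(* Let $p\in(0,1)$ and let $G=(V,E)$ be an undirected graph with $n=|V|$, $m=|E|$. Consider the $\ell_p$ QRJA instance $\mathcal I(G)$ constructed from $G$. Then every optimal solution $\mathbf x$ of $\mathcal I(G)$ satisfies, after a global constant shift making $x_{v^{(s)}}=0$: $x_{v^{(t)}}=1$ and $x_u\in\{0,1\}$ for every $u\in V$.
   Context: An $\ell_p$ QRJA instance consists of candidates, judgments $(a,b,y)$ ("$a$ is better than $b$ by $y$") with nonnegative weights, and a solution $\mathbf x$ assigns a real number $x_a$ to each candidate $a$; its loss is $\sum w\,|x_a-x_b-y|^p$ summed over the weighted judgments $(a,b,y)$ with weight $w$; optimal solutions minimize the loss (the loss is invariant under adding a common constant to all coordinates). Construction of $\mathcal I(G)$: let $w_2=\frac{2n}{1-p}+1$ and $w_1=nw_2+1$. The candidates are $V\cup\{v^{(s)},v^{(t)}\}$ (two new candidates). The judgments are: $(v^{(t)},v^{(s)},1)$ with weight $w_1$; $(v^{(s)},u,0)$ with weight $w_2$ for each $u\in V$; $(v^{(t)},u,0)$ with weight $w_2$ for each $u\in V$; and both $(u,v,1)$ and $(v,u,1)$ with weight $1$ for each edge $\{u,v\}\in E$. *)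

theory Defs
  imports Complex_Main
begin

text \<open>A QRJA instance: a finite set of weighted judgments (a, b, y, w),
  meaning "a is better than b by y" with weight w.\<close>
type_synonym 'c qrja_instance = "('c \<times> 'c \<times> real \<times> real) set"

definition qrja_loss :: "real \<Rightarrow> 'c qrja_instance \<Rightarrow> ('c \<Rightarrow> real) \<Rightarrow> real" where
  "qrja_loss p J x = (\<Sum>(a, b, y, w)\<in>J. w * \<bar>x a - x b - y\<bar> powr p)"

definition qrja_optimal :: "real \<Rightarrow> 'c qrja_instance \<Rightarrow> ('c \<Rightarrow> real) \<Rightarrow> bool" where
  "qrja_optimal p J x \<longleftrightarrow> (\<forall>x'. qrja_loss p J x \<le> qrja_loss p J x')"

datatype 'a cand = Vert 'a | VS | VT

definition w2_of :: "real \<Rightarrow> nat \<Rightarrow> real" where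
  "w2_of p n = 2 * real n / (1 - p) + 1"

definition w1_of :: "real \<Rightarrow> nat \<Rightarrow> real" where
  "w1_of p n = real n * w2_of p n + 1"

text \<open>The instance I(G) for a graph with vertex set V and edge set E
  (edges are 2-element subsets of V).\<close>
definition IG :: "real \<Rightarrow> 'a set \<Rightarrow> 'a set set \<Rightarrow> 'a cand qrja_instance" where
  "IG p V E =
     {(VT, VS, 1, w1_of p (card V))}
   \<union> {(VS, Vert u, 0, w2_of p (card V)) | u. u \<in> V}
   \<union> {(VT, Vert u, 0, w2_of p (card V)) | u. u \<in> V}
   \<union> {(Vert u, Vert v, 1, 1) | u v. {u, v} \<in> E}"

end

theory Submission
  imports Defs "HOL-Analysis.Convex"
begin

text \<open>For \<open>0 < p < 1\<close> the map \<open>t \<mapsto> t powr p\<close> is subadditive and concave. If some vertex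
  value lies strictly between or beyond the two terminals, moving it onto the nearer terminal
  saves \<open>w\<^sub>2 (1 - p) s\<^sup>p\<close> on its two terminal judgments (\<open>s\<close> being the distance moved), while by
  subadditivity the at most \<open>2n\<close> incident edge judgments grow by at most \<open>2n s\<^sup>p\<close>; the choice of
  \<open>w\<^sub>2\<close> makes the saving win. Once every vertex sits on a terminal, rounding the terminal gap \<open>d\<close>
  to \<open>1\<close> does not increase the cost of any edge pair, since \<open>|d - 1|\<^sup>p + |d + 1|\<^sup>p \<ge> 2\<^sup>p\<close>,
  and strictly decreases the terminal part, because \<open>w\<^sub>1 > n w\<^sub>2\<close> and \<open>|d|\<^sup>p + |d - 1|\<^sup>p \<ge> 1\<close>.\<close>

lemma powr_add_le_add_powr:
  fixes a b p :: real
  assumes "0 \<le> a" "0 \<le> b" "0 < p" "p \<le> 1"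
  shows "(a + b) powr p \<le> a powr p + b powr p"
proof (cases "a + b = 0")
  case True
  then show ?thesis using assms by simp
next
  case False
  then have ab: "a + b > 0" using assms by auto
  define r where "r = a / (a + b)"
  have r: "0 \<le> r" "r \<le> 1" "1 - r = b / (a + b)" using assms ab by (auto simp: r_def field_simps)
  have "1 \<le> r powr p + (1 - r) powr p"
    using powr_mono'[of p 1 r] powr_mono'[of p 1 "1 - r"] r assms by simp
  also have "\<dots> = (a powr p + b powr p) / (a + b) powr p"
    unfolding r(3) unfolding r_def using assms by (simp add: powr_divide add_divide_distrib)
  finally show ?thesis using ab by (simp add: le_divide_eq)
qed

lemma abs_add_powr_le:
  fixes a b p :: real
  assumes "0 < p" "p \<le> 1"
  shows "\<bar>a + b\<bar> powr p \<le> \<bar>a\<bar> powr p + \<bar>b\<bar> powr p"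
proof -
  have "\<bar>a + b\<bar> powr p \<le> (\<bar>a\<bar> + \<bar>b\<bar>) powr p"
    by (rule powr_mono2) (use assms in auto)
  also have "\<dots> \<le> \<bar>a\<bar> powr p + \<bar>b\<bar> powr p"
    by (rule powr_add_le_add_powr) (use assms in auto)
  finally show ?thesis .
qed

lemma powr_add_le_powr_add_mult:
  fixes s L p :: real
  assumes "0 \<le> s" "s \<le> L" "0 < p" "p < 1"
  shows "(L + s) powr p \<le> L powr p + p * s powr p"
proof (cases "s = 0")
  case True
  then show ?thesis by simp
next
  case False
  then have L: "L > 0" and t: "0 < s / L" "s / L \<le> 1" using assms by auto
  have "(1 + s / L) powr p * 1 powr (1 - p) \<le> p * (1 + s / L) + (1 - p) * 1"
    by (rule Youngs_inequality_0) (use t assms in auto)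
  then have "(1 + s / L) powr p \<le> 1 + p * (s / L)" by (simp add: algebra_simps)
  also have "p * (s / L) \<le> p * (s / L) powr p"
    using powr_mono'[of p 1 "s / L"] t assms by (intro mult_left_mono) auto
  finally have Bernoulli: "(1 + s / L) powr p \<le> 1 + p * (s / L) powr p" by simp
  have "(L + s) powr p = L powr p * (1 + s / L) powr p"
    using L t by (simp add: powr_mult[symmetric] distrib_left)
  also have "\<dots> \<le> L powr p * (1 + p * (s / L) powr p)"
    using Bernoulli by (intro mult_left_mono) auto
  also have "\<dots> = L powr p + p * s powr p"
    using L t assms by (simp add: powr_divide algebra_simps)
  finally show ?thesis .
qed

lemma snap_to_nearer_endpoint_gain:
  fixes c d k w p :: real
  assumes "0 < p" "p < 1" "0 \<le> k" "k < w * (1 - p)" "c \<noteq> 0" "c \<noteq> d"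
  shows "w * \<bar>d\<bar> powr p + k * min \<bar>c\<bar> \<bar>d - c\<bar> powr p
    < w * (\<bar>c\<bar> powr p + \<bar>d - c\<bar> powr p)"
proof -
  have w: "w > 0" using assms(2-4) zero_less_mult_pos2[of w "1 - p"] by linarith
  have gain: "w * \<bar>d\<bar> powr p + k * s powr p < w * (s powr p + L powr p)"
    if "0 < s" "s \<le> L" "\<bar>d\<bar> \<le> L + s" for s L
  proof -
    have "\<bar>d\<bar> powr p \<le> (L + s) powr p" by (rule powr_mono2) (use assms that in auto)
    also have "\<dots> \<le> L powr p + p * s powr p"
      by (rule powr_add_le_powr_add_mult) (use assms that in auto)
    finally have "w * \<bar>d\<bar> powr p \<le> w * (L powr p + p * s powr p)"
      using w by (intro mult_left_mono) auto
    moreover have "k * s powr p < w * (1 - p) * s powr p"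
      using assms(4) that(1) by (intro mult_strict_right_mono) auto
    ultimately show ?thesis by (simp add: algebra_simps)
  qed
  have triangle: "\<bar>d\<bar> \<le> \<bar>d - c\<bar> + \<bar>c\<bar>" by linarith
  show ?thesis
  proof (cases "\<bar>c\<bar> \<le> \<bar>d - c\<bar>")
    case True
    then show ?thesis using gain[of "\<bar>c\<bar>" "\<bar>d - c\<bar>"] assms triangle by simp
  next
    case False
    then show ?thesis using gain[of "\<bar>d - c\<bar>" "\<bar>c\<bar>"] assms triangle by (simp add: add.commute)
  qed
qed

lemma sum_pairs_le_if_swap_symmetric:
  fixes f g :: "'a \<Rightarrow> 'a \<Rightarrow> 'b::linordered_ab_group_add"
  assumes "\<And>u v. (u, v) \<in> S \<Longrightarrow> (v, u) \<in> S"
    and "\<And>u v. (u, v) \<in> S \<Longrightarrow> f u v + f v u \<le> g u v + g v u"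
  shows "(\<Sum>(u, v)\<in>S. f u v) \<le> (\<Sum>(u, v)\<in>S. g u v)"
proof -
  have double: "(\<Sum>(u, v)\<in>S. h u v) + (\<Sum>(u, v)\<in>S. h u v) = (\<Sum>(u, v)\<in>S. h u v + h v u)"
    for h :: "'a \<Rightarrow> 'a \<Rightarrow> 'b"
  proof -
    have "(\<Sum>(u, v)\<in>S. h v u) = (\<Sum>(u, v)\<in>S. h u v)"
      by (rule sum.reindex_bij_witness[of _ prod.swap prod.swap]) (auto intro: assms(1))
    then show ?thesis by (simp add: sum.distrib split_def)
  qed
  have "(\<Sum>(u, v)\<in>S. f u v + f v u) \<le> (\<Sum>(u, v)\<in>S. g u v + g v u)"
    by (rule sum_mono) (use assms(2) in auto)
  then show ?thesis unfolding double[symmetric] by (meson add_strict_mono not_le)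
qed

lemma sum_incident_pairs_le:
  fixes c :: real
  assumes "finite V" "S \<subseteq> V \<times> V" "0 \<le> c"
  shows "(\<Sum>(u, v)\<in>S. (if u = w then c else 0) + (if v = w then c else 0)) \<le> 2 * card V * c"
proof -
  have "(\<Sum>(u, v)\<in>S. (if u = w then c else 0) + (if v = w then c else 0))
      \<le> (\<Sum>(u, v)\<in>V \<times> V. (if u = w then c else 0) + (if v = w then c else 0))"
    by (rule sum_mono2) (use assms in \<open>auto intro: finite_cartesian_product\<close>)
  also have "\<dots> = (\<Sum>u\<in>V. \<Sum>v\<in>V. (if u = w then c else 0) + (if v = w then c else 0))"
    by (rule sum.cartesian_product[symmetric])
  also have "\<dots> \<le> 2 * card V * c"
    using assms by (simp add: sum.distrib sum.delta sum_distrib_left[symmetric])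
  finally show ?thesis .
qed

definition edge_pairs :: "'a set set \<Rightarrow> ('a \<times> 'a) set" where
  "edge_pairs E = {(u, v). {u, v} \<in> E}"

definition terminal_loss :: "real \<Rightarrow> ('a cand \<Rightarrow> real) \<Rightarrow> 'a \<Rightarrow> real" where
  "terminal_loss p x u = \<bar>x VS - x (Vert u)\<bar> powr p + \<bar>x VT - x (Vert u)\<bar> powr p"

definition edge_loss :: "real \<Rightarrow> ('a cand \<Rightarrow> real) \<Rightarrow> 'a \<Rightarrow> 'a \<Rightarrow> real" where
  "edge_loss p x u v = \<bar>x (Vert u) - x (Vert v) - 1\<bar> powr p"

lemma edge_pairs_swap: "(u, v) \<in> edge_pairs E \<Longrightarrow> (v, u) \<in> edge_pairs E"
  by (simp add: edge_pairs_def insert_commute)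

lemma edge_pairs_subset:
  assumes "\<forall>e\<in>E. \<exists>u v. u \<in> V \<and> v \<in> V \<and> u \<noteq> v \<and> e = {u, v}"
  shows "edge_pairs E \<subseteq> V \<times> V"
  using assms by (fastforce simp: edge_pairs_def doubleton_eq_iff)

lemma qrja_loss_IG:
  assumes "finite V" "edge_pairs E \<subseteq> V \<times> V"
  shows "qrja_loss p (IG p V E) x =
    w1_of p (card V) * \<bar>x VT - x VS - 1\<bar> powr p
    + w2_of p (card V) * (\<Sum>u\<in>V. terminal_loss p x u)
    + (\<Sum>(u, v)\<in>edge_pairs E. edge_loss p x u v)"
proof -
  let ?w1 = "w1_of p (card V)" and ?w2 = "w2_of p (card V)"
  let ?f = "\<lambda>(a, b, y, w). w * \<bar>x a - x b - y\<bar> powr p"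
  define S where "S = (\<lambda>u. (VS :: 'a cand, Vert u, 0::real, ?w2)) ` V"
  define T where "T = (\<lambda>u. (VT :: 'a cand, Vert u, 0::real, ?w2)) ` V"
  define P where "P = (\<lambda>(u, v). (Vert u, Vert v, 1::real, 1::real)) ` edge_pairs E"
  have IG: "IG p V E = insert (VT, VS, 1, ?w1) (S \<union> T \<union> P)"
    unfolding IG_def S_def T_def P_def edge_pairs_def by auto
  have finite: "finite S" "finite T" "finite P"
    using assms finite_subset[OF assms(2)] by (auto simp: S_def T_def P_def)
  have "qrja_loss p (IG p V E) x = ?f (VT, VS, 1, ?w1) + sum ?f S + sum ?f T + sum ?f P"
  proof -
    have "S \<inter> T = {}" "(S \<union> T) \<inter> P = {}" "(VT, VS, 1, ?w1) \<notin> S \<union> T \<union> P"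
      by (auto simp: S_def T_def P_def)
    then show ?thesis
      unfolding qrja_loss_def IG using finite by (simp add: sum.union_disjoint add.assoc)
  qed
  also have "sum ?f S = (\<Sum>u\<in>V. ?w2 * \<bar>x VS - x (Vert u)\<bar> powr p)"
    unfolding S_def by (subst sum.reindex) (auto simp: inj_on_def)
  also have "sum ?f T = (\<Sum>u\<in>V. ?w2 * \<bar>x VT - x (Vert u)\<bar> powr p)"
    unfolding T_def by (subst sum.reindex) (auto simp: inj_on_def)
  also have "sum ?f P = (\<Sum>(u, v)\<in>edge_pairs E. edge_loss p x u v)"
    unfolding P_def edge_loss_def by (subst sum.reindex) (auto simp: inj_on_def intro!: sum.cong)
  finally show ?thesis
    by (simp add: terminal_loss_def sum.distrib distrib_left sum_distrib_left)
qed

lemma edge_loss_update_le: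
  assumes "0 < p" "p \<le> 1"
  shows "edge_loss p (x(Vert w := z)) u v \<le> edge_loss p x u v
    + (if u = w then \<bar>z - x (Vert w)\<bar> powr p else 0)
    + (if v = w then \<bar>z - x (Vert w)\<bar> powr p else 0)"
  using abs_add_powr_le[OF assms, of "x (Vert u) - x (Vert v) - 1" "z - x (Vert w)"]
    abs_add_powr_le[OF assms, of "x (Vert u) - x (Vert v) - 1" "x (Vert w) - z"]
  by (auto simp: edge_loss_def abs_minus_commute algebra_simps)

lemma sum_terminal_loss_update:
  assumes "finite V" "w \<in> V"
  shows "(\<Sum>u\<in>V. terminal_loss p (x(Vert w := z)) u)
    = (\<Sum>u\<in>V. terminal_loss p x u) - terminal_loss p x w + terminal_loss p (x(Vert w := z)) w"
proof -
  have "(\<Sum>u\<in>V - {w}. terminal_loss p (x(Vert w := z)) u) = (\<Sum>u\<in>V - {w}. terminal_loss p x u)"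
    by (rule sum.cong) (auto simp: terminal_loss_def)
  then show ?thesis using assms by (simp add: sum.remove)
qed

lemma qrja_loss_IG_update_le:
  assumes "0 < p" "p \<le> 1" "finite V" "edge_pairs E \<subseteq> V \<times> V" "w \<in> V"
  shows "qrja_loss p (IG p V E) (x(Vert w := z)) \<le> qrja_loss p (IG p V E) x
    + w2_of p (card V) * (terminal_loss p (x(Vert w := z)) w - terminal_loss p x w)
    + 2 * card V * \<bar>z - x (Vert w)\<bar> powr p"
proof -
  let ?x' = "x(Vert w := z)" and ?s = "\<bar>z - x (Vert w)\<bar> powr p"
  have "(\<Sum>(u, v)\<in>edge_pairs E. edge_loss p ?x' u v)
      \<le> (\<Sum>(u, v)\<in>edge_pairs E. edge_loss p x u v
          + ((if u = w then ?s else 0) + (if v = w then ?s else 0)))"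
  proof (rule sum_mono, clarify)
    fix u v
    show "edge_loss p ?x' u v \<le> edge_loss p x u v + ((if u = w then ?s else 0) + (if v = w then ?s else 0))"
      using edge_loss_update_le[OF assms(1,2), of x w z u v] by (simp only: add.assoc)
  qed
  also have "\<dots> \<le> (\<Sum>(u, v)\<in>edge_pairs E. edge_loss p x u v) + 2 * card V * ?s"
    using sum_incident_pairs_le[OF assms(3,4), of ?s w] by (simp add: sum.distrib split_def)
  finally have "(\<Sum>(u, v)\<in>edge_pairs E. edge_loss p ?x' u v)
      \<le> (\<Sum>(u, v)\<in>edge_pairs E. edge_loss p x u v) + 2 * card V * ?s" .
  moreover have "w2_of p (card V) * (\<Sum>u\<in>V. terminal_loss p ?x' u)
      = w2_of p (card V) * (\<Sum>u\<in>V. terminal_loss p x u)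
        + w2_of p (card V) * (terminal_loss p ?x' w - terminal_loss p x w)"
    unfolding sum_terminal_loss_update[OF assms(3,5)] by (simp add: algebra_simps)
  ultimately show ?thesis unfolding qrja_loss_IG[OF assms(3,4)] by simp
qed

lemma IG_optimal_vertex_at_terminal:
  assumes "0 < p" "p < 1" "finite V" "edge_pairs E \<subseteq> V \<times> V"
    and "qrja_optimal p (IG p V E) x" "u \<in> V"
  shows "x (Vert u) = x VS \<or> x (Vert u) = x VT"
proof (rule ccontr)
  assume off: "\<not> ?thesis"
  define c where "c = x (Vert u) - x VS"
  define d where "d = x VT - x VS"
  define z where "z = (if \<bar>c\<bar> \<le> \<bar>d - c\<bar> then x VS else x VT)"
  let ?x' = "x(Vert u := z)" and ?n = "card V" and ?w2 = "w2_of p (card V)"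
  have moved: "\<bar>z - x (Vert u)\<bar> = min \<bar>c\<bar> \<bar>d - c\<bar>"
    by (auto simp: z_def c_def d_def abs_minus_commute)
  have "?w2 * (1 - p) = 2 * real ?n + (1 - p)"
    using assms(1,2) by (simp add: w2_of_def field_simps)
  then have "2 * real ?n < ?w2 * (1 - p)" using assms(2) by linarith
  then have "?w2 * \<bar>d\<bar> powr p + 2 * ?n * min \<bar>c\<bar> \<bar>d - c\<bar> powr p
      < ?w2 * (\<bar>c\<bar> powr p + \<bar>d - c\<bar> powr p)"
    by (intro snap_to_nearer_endpoint_gain) (use assms off in \<open>auto simp: c_def d_def\<close>)
  moreover have "terminal_loss p ?x' u = \<bar>d\<bar> powr p"
    by (auto simp: terminal_loss_def z_def d_def abs_minus_commute)
  moreover have "terminal_loss p x u = \<bar>c\<bar> powr p + \<bar>d - c\<bar> powr p"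
    by (simp add: terminal_loss_def c_def d_def abs_minus_commute)
  ultimately have "qrja_loss p (IG p V E) ?x' < qrja_loss p (IG p V E) x"
    using qrja_loss_IG_update_le[OF assms(1) _ assms(3,4,6), of x z] assms(2) moved
    by (simp add: algebra_simps)
  then show False using assms(5) by (simp add: qrja_optimal_def not_less[symmetric])
qed

lemma rounded_pair_loss_le:
  fixes a b d p :: real
  assumes "0 < p" "p \<le> 1" "a \<in> {0, d}" "b \<in> {0, d}"
  shows "\<bar>of_bool (a \<noteq> 0) - of_bool (b \<noteq> 0) - 1\<bar> powr p
      + \<bar>of_bool (b \<noteq> 0) - of_bool (a \<noteq> 0) - 1\<bar> powr p
    \<le> \<bar>a - b - 1\<bar> powr p + \<bar>b - a - 1\<bar> powr p"
proof (cases "a = b")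
  case False
  have "2 powr p \<le> \<bar>d - 1\<bar> powr p + \<bar>- d - 1\<bar> powr p"
    using abs_add_powr_le[OF assms(1,2), of "1 - d" "d + 1"] by (simp add: abs_minus_commute add.commute)
  then show ?thesis using False assms(3,4) by (auto simp: add.commute)
qed simp

lemma IG_optimal_terminal_gap:
  assumes "0 < p" "p < 1" "finite V" "edge_pairs E \<subseteq> V \<times> V"
    and "qrja_optimal p (IG p V E) x"
    and at_terminal: "\<forall>u\<in>V. x (Vert u) = x VS \<or> x (Vert u) = x VT"
  shows "x VT - x VS = 1"
proof (rule ccontr)
  assume gap: "x VT - x VS \<noteq> 1"
  define d where "d = x VT - x VS"
  define x' where "x' = (\<lambda>c. case c of VS \<Rightarrow> x VS | VT \<Rightarrow> x VS + 1
    | Vert u \<Rightarrow> x VS + of_bool (x (Vert u) \<noteq> x VS))"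
  let ?n = "card V" and ?w2 = "w2_of p (card V)" and ?loss = "qrja_loss p (IG p V E)"
  have "terminal_loss p x' u = 1" for u
    by (cases "x (Vert u) = x VS") (auto simp: terminal_loss_def x'_def)
  then have loss_x': "?loss x' = ?n * ?w2 + (\<Sum>(u, v)\<in>edge_pairs E. edge_loss p x' u v)"
    unfolding qrja_loss_IG[OF assms(3,4)] by (simp add: x'_def)
  have "terminal_loss p x u = \<bar>d\<bar> powr p" if "u \<in> V" for u
    using at_terminal that by (auto simp: terminal_loss_def d_def abs_minus_commute)
  then have loss_x: "?loss x = ?n * ?w2 * \<bar>d - 1\<bar> powr p + \<bar>d - 1\<bar> powr p + ?n * ?w2 * \<bar>d\<bar> powr p
      + (\<Sum>(u, v)\<in>edge_pairs E. edge_loss p x u v)"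
    unfolding qrja_loss_IG[OF assms(3,4)] by (simp add: d_def w1_of_def algebra_simps)
  have "(\<Sum>(u, v)\<in>edge_pairs E. edge_loss p x' u v) \<le> (\<Sum>(u, v)\<in>edge_pairs E. edge_loss p x u v)"
  proof (rule sum_pairs_le_if_swap_symmetric)
    fix u v assume "(u, v) \<in> edge_pairs E"
    then have "x (Vert u) - x VS \<in> {0, d}" "x (Vert v) - x VS \<in> {0, d}"
      using assms(4) at_terminal by (auto simp: d_def)
    from rounded_pair_loss_le[OF assms(1) _ this] assms(2)
    show "edge_loss p x' u v + edge_loss p x' v u \<le> edge_loss p x u v + edge_loss p x v u"
      by (simp add: edge_loss_def x'_def)
  qed (rule edge_pairs_swap)
  moreover have "?n * ?w2 \<le> ?n * ?w2 * \<bar>d\<bar> powr p + ?n * ?w2 * \<bar>d - 1\<bar> powr p"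
  proof -
    have "1 \<le> \<bar>d\<bar> powr p + \<bar>d - 1\<bar> powr p"
      using abs_add_powr_le[of p d "1 - d"] assms(1,2) by (simp add: abs_minus_commute)
    moreover have "0 \<le> ?w2" using assms(1,2) by (simp add: w2_of_def)
    ultimately show ?thesis using mult_left_mono[of 1 "\<bar>d\<bar> powr p + \<bar>d - 1\<bar> powr p" "?n * ?w2"]
      by (simp add: distrib_left)
  qed
  moreover have "0 < \<bar>d - 1\<bar> powr p" using gap by (simp add: d_def)
  ultimately have "?loss x' < ?loss x"
    unfolding loss_x loss_x' by linarith
  then show False using assms(5) by (simp add: qrja_optimal_def not_less[symmetric])
qed

theorem mainTheorem6:
  fixes p :: real and V :: "'a set" and E :: "'a set set" and x :: "'a cand \<Rightarrow> real"
  assumes "0 < p" and "p < 1"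
    and "finite V"
    and "\<forall>e\<in>E. \<exists>u v. u \<in> V \<and> v \<in> V \<and> u \<noteq> v \<and> e = {u, v}"
    and "qrja_optimal p (IG p V E) x"
  shows "x VT - x VS = 1 \<and> (\<forall>u\<in>V. x (Vert u) - x VS \<in> {0, 1})"
proof -
  have edges: "edge_pairs E \<subseteq> V \<times> V" using edge_pairs_subset[OF assms(4)] .
  have at_terminal: "\<forall>u\<in>V. x (Vert u) = x VS \<or> x (Vert u) = x VT"
    using IG_optimal_vertex_at_terminal[OF assms(1-3) edges assms(5)] by blast
  have "x VT - x VS = 1"
    using IG_optimal_terminal_gap[OF assms(1-3) edges assms(5) at_terminal] .
  with at_terminal show ?thesis by auto
qed

end
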